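(* Let $\mathcal{A}$ be the family of all Lebesgue-measurable subsets $A\subseteq(0,\infty)$ with $\lambda(A)\le\sqrt{\inf A}$. For measurable $f:(0,\infty)\to[0,\infty]$ set $\rho_Y(f)=\sup_{A\in\mathcal{A}}\int_A f(t)\,dt$. Then $\rho_Y$ is a function norm, the function space $Y$ it generates is a Banach space, and $Y$ is not essentially subrearrangement-invariant.
   Context: $\lambda$ is Lebesgue measure on $(0,\infty)$, with its usual order. A function norm on $(0,\infty)$ is a map $\rho$ from nonnegative measurable functions into $[0,\infty]$ that is subadditive, positively homogeneous, and vanishes exactly on functions that are $0$ a.e.; the function space consists of a.e.-classes of measurable $f:(0,\infty)\to[-\infty,\infty]$ with $\|f\|:=\rho(|f|)<\infty$. $\mathbb{MO}(E,F)$ is the set of strictly increasing bijections $m:E\to F$ such that $m$ and $m^{-1}$ are measure-preserving (preimages of measurable sets are measurable of equal measure). A function space $X$ on $(0,\infty)$ is subrearrangement-invariant if $\|f\circ m\|_X=\|f\mathbf{1}_F\|_X$ for every measurable $F\subseteq(0,\infty)$, every $m\in\mathbb{MO}((0,\infty),F)$ and every $f\in X$; it is essentially subrearrangement-invariant if it admits an equivalent subrearrangement-invariant norm. *)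

theory Defs
  imports "HOL-Analysis.Analysis"
begin

text \<open>Functions on (0,infinity) are represented by functions on the reals; only
  their values on (0,infinity) matter. Measurability is Lebesgue measurability on
  (0,infinity).\<close>

abbreviation pos_half :: "real set" where "pos_half \<equiv> {0<..}"

definition nonneg_meas :: "(real \<Rightarrow> ennreal) set" where
  "nonneg_meas = borel_measurable (lebesgue_on pos_half)"

definition function_norm :: "((real \<Rightarrow> ennreal) \<Rightarrow> ennreal) \<Rightarrow> bool" where
  "function_norm \<rho> \<longleftrightarrow>
     (\<forall>f\<in>nonneg_meas. \<forall>g\<in>nonneg_meas. (\<forall>t>0. f t = g t) \<longrightarrow> \<rho> f = \<rho> g) \<and>
     (\<forall>f\<in>nonneg_meas. \<forall>g\<in>nonneg_meas. \<rho> (\<lambda>t. f t + g t) \<le> \<rho> f + \<rho> g) \<and>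
     (\<forall>f\<in>nonneg_meas. \<forall>a::real. a \<ge> 0 \<longrightarrow> \<rho> (\<lambda>t. ennreal a * f t) = ennreal a * \<rho> f) \<and>
     (\<forall>f\<in>nonneg_meas. \<rho> f = 0 \<longleftrightarrow> (AE t in lebesgue_on pos_half. f t = 0))"

definition fnorm :: "((real \<Rightarrow> ennreal) \<Rightarrow> ennreal) \<Rightarrow> (real \<Rightarrow> ereal) \<Rightarrow> ennreal" where
  "fnorm \<rho> f = \<rho> (\<lambda>t. e2ennreal \<bar>f t\<bar>)"

definition fspace :: "((real \<Rightarrow> ennreal) \<Rightarrow> ennreal) \<Rightarrow> (real \<Rightarrow> ereal) set" where
  "fspace \<rho> = {f. f \<in> borel_measurable (lebesgue_on pos_half) \<and> fnorm \<rho> f < \<infinity>}"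

text \<open>The function space (a.e.-classes of elements of fspace, normed by fnorm) is a
  Banach space: it is a real vector space, fnorm is well defined on a.e.-classes and is
  a norm on them, and it is complete.\<close>
definition banach_fspace :: "((real \<Rightarrow> ennreal) \<Rightarrow> ennreal) \<Rightarrow> bool" where
  "banach_fspace \<rho> \<longleftrightarrow>
     (\<forall>f\<in>fspace \<rho>. \<forall>g\<in>fspace \<rho>. (\<lambda>t. f t + g t) \<in> fspace \<rho>) \<and>
     (\<forall>f\<in>fspace \<rho>. \<forall>c::real. (\<lambda>t. ereal c * f t) \<in> fspace \<rho>) \<and>
     (\<forall>f\<in>fspace \<rho>. \<forall>g\<in>fspace \<rho>.
        (AE t in lebesgue_on pos_half. f t = g t) \<longrightarrow> fnorm \<rho> f = fnorm \<rho> g) \<and>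
     (\<forall>f\<in>fspace \<rho>. fnorm \<rho> f = 0 \<longleftrightarrow> (AE t in lebesgue_on pos_half. f t = 0)) \<and>
     (\<forall>f\<in>fspace \<rho>. \<forall>c::real. fnorm \<rho> (\<lambda>t. ereal c * f t) = ennreal \<bar>c\<bar> * fnorm \<rho> f) \<and>
     (\<forall>f\<in>fspace \<rho>. \<forall>g\<in>fspace \<rho>. fnorm \<rho> (\<lambda>t. f t + g t) \<le> fnorm \<rho> f + fnorm \<rho> g) \<and>
     (\<forall>u::nat \<Rightarrow> real \<Rightarrow> ereal. (\<forall>n. u n \<in> fspace \<rho>) \<longrightarrow>
        (\<forall>e>0. \<exists>N. \<forall>m\<ge>N. \<forall>n\<ge>N. fnorm \<rho> (\<lambda>t. u m t - u n t) < ennreal e) \<longrightarrow>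
        (\<exists>f\<in>fspace \<rho>. (\<lambda>n. fnorm \<rho> (\<lambda>t. u n t - f t)) \<longlonglongrightarrow> 0))"

definition measure_preserving_on :: "real set \<Rightarrow> real set \<Rightarrow> (real \<Rightarrow> real) \<Rightarrow> bool" where
  "measure_preserving_on E F m \<longleftrightarrow>
     (\<forall>B. B \<in> sets lebesgue \<longrightarrow> B \<subseteq> F \<longrightarrow>
        m -` B \<inter> E \<in> sets lebesgue \<and> emeasure lebesgue (m -` B \<inter> E) = emeasure lebesgue B)"

definition MO :: "real set \<Rightarrow> real set \<Rightarrow> (real \<Rightarrow> real) set" where
  "MO E F = {m. strict_mono_on E m \<and> bij_betw m E F \<and>
                measure_preserving_on E F m \<and> measure_preserving_on F E (inv_into E m)}"

definition subrearrangement_invariant :: "((real \<Rightarrow> ennreal) \<Rightarrow> ennreal) \<Rightarrow> bool" where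
  "subrearrangement_invariant \<rho> \<longleftrightarrow>
     (\<forall>F m f. F \<in> sets lebesgue \<longrightarrow> F \<subseteq> pos_half \<longrightarrow> m \<in> MO pos_half F \<longrightarrow>
        f \<in> fspace \<rho> \<longrightarrow>
        fnorm \<rho> (f \<circ> m) = fnorm \<rho> (\<lambda>t. if t \<in> F then f t else 0))"

definition ess_subrearrangement_invariant :: "((real \<Rightarrow> ennreal) \<Rightarrow> ennreal) \<Rightarrow> bool" where
  "ess_subrearrangement_invariant \<rho> \<longleftrightarrow>
     (\<exists>\<sigma>. function_norm \<sigma> \<and> subrearrangement_invariant \<sigma> \<and> fspace \<sigma> = fspace \<rho> \<and>
        (\<exists>c::real. c > 0 \<and> (\<forall>f\<in>fspace \<rho>.
           fnorm \<rho> f \<le> ennreal c * fnorm \<sigma> f \<and> fnorm \<sigma> f \<le> ennreal c * fnorm \<rho> f)))"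

text \<open>The family A: measurable A in (0,infinity) with lambda(A) <= sqrt(inf A)
  (the empty set, with inf = +infinity, is admitted; it does not affect the supremum).\<close>
definition calA :: "real set set" where
  "calA = {A. A \<in> sets lebesgue \<and> A \<subseteq> pos_half \<and>
              (A = {} \<or> emeasure lebesgue A \<le> ennreal (sqrt (Inf A)))}"

definition rhoY :: "(real \<Rightarrow> ennreal) \<Rightarrow> ennreal" where
  "rhoY f = (SUP A\<in>calA. set_nn_integral lebesgue A f)"

end

theory Submission
  imports Defs
begin

text \<open>
  The first two claims hold for the supremum of the integrals over any family of measurable
  subsets of \((0,\infty)\) containing a countable cover of \((0,\infty)\); for \(\mathcal{A}\)
  the intervals \([q, q + \sqrt q]\), \(q\) rational, do. Covering makes a.e. statements on the
  members global, so the norm vanishes only on null functions; completeness is the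
  Riesz--Fischer argument: a fast Cauchy subsequence converges a.e. by countable
  subadditivity, and Fatou's lemma bounds its distance to the limit.

  The norm is not invariant under shifts: the indicator of \((b, b + \sqrt b]\) has norm
  \(\sqrt b\), while its shift to \((0, \sqrt b]\) has norm at most \(b^{1/4}\), because an
  admissible set meeting \((0, s]\) has measure at most \(\sqrt s\). The shift lies in
  \(\mathbb{MO}((0,\infty), (b,\infty))\), so an equivalent subrearrangement-invariant norm
  with constant \(c\) would give \(\sqrt b \le c^2 b^{1/4}\) for all \(b\).
\<close>

lemma fast_Cauchy_subseq:
  fixes d :: "nat \<Rightarrow> nat \<Rightarrow> ennreal"
  assumes "\<forall>e>0. \<exists>N. \<forall>m\<ge>N. \<forall>n\<ge>N. d m n < ennreal e"
  obtains r where "strict_mono r" "\<And>k. d (r (Suc k)) (r k) < ennreal ((1/2)^k)"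
proof -
  have "\<forall>k. \<exists>N. \<forall>m\<ge>N. \<forall>n\<ge>N. d m n < ennreal ((1/2)^k)"
    using assms by simp
  then obtain N where N: "\<And>k m n. m \<ge> N k \<Longrightarrow> n \<ge> N k \<Longrightarrow> d m n < ennreal ((1/2)^k)"
    unfolding choice_iff by blast
  define r where "r k = Max (N ` {..k}) + k" for k
    \<comment> \<open>the summand \<open>k\<close> makes \<open>r\<close> strictly increasing\<close>
  have N_le_r: "N k \<le> r j" if "k \<le> j" for k j
  proof -
    have "N k \<le> Max (N ` {..j})" using that by (intro Max_ge) auto
    then show ?thesis by (simp add: r_def)
  qed
  have "Max (N ` {..k}) \<le> Max (N ` {..Suc k})" for k
    by (intro Max_mono) auto
  then have "r k < r (Suc k)" for k
    unfolding r_def by (metis add_Suc_right add_le_less_mono lessI)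
  then have "strict_mono r"
    by (rule strict_monoI_Suc)
  moreover have "d (r (Suc k)) (r k) < ennreal ((1/2)^k)" for k
    by (intro N N_le_r) auto
  ultimately show ?thesis using that by blast
qed

lemma convergent_if_summable_abs_diff:
  fixes x :: "nat \<Rightarrow> real"
  assumes "summable (\<lambda>k. \<bar>x (Suc k) - x k\<bar>)"
  shows "convergent x"
proof -
  have "(\<lambda>n. (\<Sum>k<n. x (Suc k) - x k) + x 0) \<longlonglongrightarrow> (\<Sum>k. x (Suc k) - x k) + x 0"
    using summable_rabs_cancel[OF assms] by (intro tendsto_add summable_LIMSEQ tendsto_const)
  then show ?thesis
    unfolding sum_lessThan_telescope convergent_def by auto
qed

lemma tendsto_ereal_if_sum_abs_diff_finite:
  fixes x :: "nat \<Rightarrow> ereal"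
  assumes "\<And>k. \<bar>x k\<bar> \<noteq> \<infinity>" and "(\<Sum>k. e2ennreal \<bar>x (Suc k) - x k\<bar>) \<noteq> \<infinity>"
  shows "x \<longlonglongrightarrow> ereal (lim (\<lambda>k. real_of_ereal (x k)))"
proof -
  define y where "y k = real_of_ereal (x k)" for k
  have x_eq: "x = (\<lambda>k. ereal (y k))"
    using assms(1) by (simp add: y_def ereal_real' fun_eq_iff)
  have "summable (\<lambda>k. \<bar>y (Suc k) - y k\<bar>)"
    using assms(2) unfolding x_eq by (intro summable_suminf_not_top) auto
  then have "y \<longlonglongrightarrow> lim y"
    by (intro convergent_LIMSEQ_iff[THEN iffD1] convergent_if_summable_abs_diff)
  then show ?thesis
    unfolding x_eq y_def[symmetric] by simp
qed

lemma e2ennreal_abs_cmult: "e2ennreal \<bar>ereal c * x\<bar> = ennreal \<bar>c\<bar> * e2ennreal \<bar>x\<bar>"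
proof -
  have "\<bar>ereal c * x\<bar> = ereal \<bar>c\<bar> * \<bar>x\<bar>" by (cases x) (auto simp: abs_mult)
  moreover have "e2ennreal (ereal a * y) = ennreal a * e2ennreal y" if "a \<ge> 0" "y \<ge> 0" for a y
    using that by (cases y) (auto simp: ennreal_mult ennreal_mult_top e2ennreal_neg)
  ultimately show ?thesis by simp
qed

lemma e2ennreal_abs_add_le: "e2ennreal \<bar>x + y\<bar> \<le> e2ennreal \<bar>x\<bar> + e2ennreal \<bar>y\<bar>"
proof -
  have "e2ennreal (a + b) = e2ennreal a + e2ennreal b" if "a \<ge> 0" "b \<ge> 0" for a b :: ereal
    using that by (cases a; cases b) (auto simp: ennreal_plus)
  then show ?thesis using e2ennreal_mono[OF ereal_abs_add[of x y]] by simp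
qed

lemma e2ennreal_abs_eq_0_iff: "e2ennreal \<bar>x\<bar> = 0 \<longleftrightarrow> x = 0"
  by (cases x) (auto simp: e2ennreal_ereal)

lemma e2ennreal_abs_ereal_le: "e2ennreal \<bar>ereal b\<bar> \<le> e2ennreal \<bar>a - ereal b\<bar> + e2ennreal \<bar>a\<bar>"
proof (cases a)
  case (real r)
  have "ennreal \<bar>b\<bar> \<le> ennreal (\<bar>r - b\<bar> + \<bar>r\<bar>)" by (intro ennreal_leI) auto
  then show ?thesis using real by (simp add: ennreal_plus)
qed (auto simp: e2ennreal_infty)

lemma suminf_ennreal_half_power: "(\<Sum>k. ennreal ((1/2)^k)) = ennreal 2"
proof -
  have "(\<lambda>k. (1/2::real)^k) sums 2" using geometric_sums[of "1/2::real"] by simp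
  then show ?thesis by (rule suminf_ennreal_eq[rotated]) simp
qed

lemma abs_measurable_nonneg_meas:
  "f \<in> borel_measurable (lebesgue_on pos_half) \<Longrightarrow> (\<lambda>t. e2ennreal \<bar>f t\<bar>) \<in> nonneg_meas"
  unfolding nonneg_meas_def by measurable

lemma fspace_measurable: "f \<in> fspace \<rho> \<Longrightarrow> f \<in> borel_measurable (lebesgue_on pos_half)"
  by (simp add: fspace_def)

lemma fnorm_indicator: "fnorm \<rho> (\<lambda>t. ereal (indicator S t)) = \<rho> (indicator S)"
  unfolding fnorm_def by (simp add: ennreal_indicator)

definition sup_set_nn_integral :: "real set set \<Rightarrow> (real \<Rightarrow> ennreal) \<Rightarrow> ennreal" where
  "sup_set_nn_integral \<A> f = (SUP A\<in>\<A>. \<integral>\<^sup>+t. f t \<partial>lebesgue_on A)"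

locale countable_cover_pos_half =
  fixes \<A> :: "real set set"
  assumes sets_lebesgue: "A \<in> \<A> \<Longrightarrow> A \<in> sets lebesgue"
    and subset_pos_half: "A \<in> \<A> \<Longrightarrow> A \<subseteq> pos_half"
    and countable_subcover: "\<exists>\<C>\<subseteq>\<A>. countable \<C> \<and> pos_half \<subseteq> \<Union>\<C>"
begin

abbreviation \<rho> :: "(real \<Rightarrow> ennreal) \<Rightarrow> ennreal" where
  "\<rho> \<equiv> sup_set_nn_integral \<A>"

lemma measurable_member:
  "f \<in> borel_measurable (lebesgue_on pos_half) \<Longrightarrow> A \<in> \<A> \<Longrightarrow> f \<in> borel_measurable (lebesgue_on A)"
  using measurable_restrict_mono subset_pos_half by blast

lemma AE_member:
  assumes "AE t in lebesgue_on pos_half. P t" "A \<in> \<A>"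
  shows "AE t in lebesgue_on A. P t"
proof -
  have "AE t in lebesgue. t \<in> pos_half \<longrightarrow> P t"
    using assms(1) by (subst (asm) AE_restrict_space_iff) auto
  then have "AE t in lebesgue. t \<in> A \<longrightarrow> P t"
    by eventually_elim (use subset_pos_half[OF assms(2)] in auto)
  then show ?thesis
    using sets_lebesgue[OF assms(2)] by (subst AE_restrict_space_iff) auto
qed

lemma AE_pos_half_if_members:
  assumes "\<And>A. A \<in> \<A> \<Longrightarrow> AE t in lebesgue_on A. P t"
  shows "AE t in lebesgue_on pos_half. P t"
proof -
  obtain \<C> where \<C>: "\<C> \<subseteq> \<A>" "countable \<C>" "pos_half \<subseteq> \<Union>\<C>"
    using countable_subcover by blast
  have "AE t in lebesgue. t \<in> A \<longrightarrow> P t" if "A \<in> \<C>" for A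
    using assms[of A] that \<C>(1) sets_lebesgue[of A] AE_restrict_space_iff[of A lebesgue P] by auto
  then have "AE t in lebesgue. \<forall>A\<in>\<C>. t \<in> A \<longrightarrow> P t"
    using \<C>(2) by (intro AE_ball_countable') auto
  then have "AE t in lebesgue. t \<in> pos_half \<longrightarrow> P t"
    by eventually_elim (use \<C>(3) in blast)
  then show ?thesis by (subst AE_restrict_space_iff) auto
qed

lemma integral_le_rho: "A \<in> \<A> \<Longrightarrow> (\<integral>\<^sup>+t. f t \<partial>lebesgue_on A) \<le> \<rho> f"
  unfolding sup_set_nn_integral_def by (rule SUP_upper)

lemma rho_le_iff: "\<rho> f \<le> c \<longleftrightarrow> (\<forall>A\<in>\<A>. (\<integral>\<^sup>+t. f t \<partial>lebesgue_on A) \<le> c)"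
  unfolding sup_set_nn_integral_def by (rule SUP_le_iff)

lemma rho_mono_AE:
  assumes "AE t in lebesgue_on pos_half. f t \<le> g t"
  shows "\<rho> f \<le> \<rho> g"
  unfolding rho_le_iff
  using assms by (blast intro: order.trans[OF nn_integral_mono_AE integral_le_rho] AE_member)

lemma rho_mono: "(\<And>t. t > 0 \<Longrightarrow> f t \<le> g t) \<Longrightarrow> \<rho> f \<le> \<rho> g"
  by (rule rho_mono_AE) (auto intro!: AE_I2)

lemma rho_add_le:
  assumes "f \<in> nonneg_meas" "g \<in> nonneg_meas"
  shows "\<rho> (\<lambda>t. f t + g t) \<le> \<rho> f + \<rho> g"
  unfolding rho_le_iff
proof
  fix A assume A: "A \<in> \<A>"
  have "(\<integral>\<^sup>+t. f t + g t \<partial>lebesgue_on A) = (\<integral>\<^sup>+t. f t \<partial>lebesgue_on A) + (\<integral>\<^sup>+t. g t \<partial>lebesgue_on A)"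
    using assms A by (intro nn_integral_add) (auto simp: nonneg_meas_def intro: measurable_member)
  also have "\<dots> \<le> \<rho> f + \<rho> g"
    using A by (intro add_mono integral_le_rho)
  finally show "(\<integral>\<^sup>+t. f t + g t \<partial>lebesgue_on A) \<le> \<rho> f + \<rho> g" .
qed

lemma rho_cmult:
  assumes "f \<in> nonneg_meas"
  shows "\<rho> (\<lambda>t. c * f t) = c * \<rho> f"
  unfolding sup_set_nn_integral_def SUP_mult_left_ennreal
  using assms by (intro SUP_cong refl nn_integral_cmult) (auto simp: nonneg_meas_def intro: measurable_member)

lemma rho_eq_0_iff:
  assumes "f \<in> nonneg_meas"
  shows "\<rho> f = 0 \<longleftrightarrow> (AE t in lebesgue_on pos_half. f t = 0)"
proof -
  have "\<rho> f = 0 \<longleftrightarrow> (\<forall>A\<in>\<A>. AE t in lebesgue_on A. f t = 0)"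
    using assms unfolding le_zero_eq[symmetric] rho_le_iff
    by (intro ball_cong refl) (simp add: nonneg_meas_def nn_integral_0_iff_AE measurable_member)
  then show ?thesis
    using AE_pos_half_if_members AE_member by blast
qed

lemma function_norm_rho: "function_norm \<rho>"
  unfolding function_norm_def
  by (auto simp: rho_add_le rho_cmult rho_eq_0_iff intro!: antisym rho_mono)

lemma AE_finite_if_rho_finite:
  assumes "f \<in> nonneg_meas" "\<rho> f < \<infinity>"
  shows "AE t in lebesgue_on pos_half. f t \<noteq> \<infinity>"
proof (rule AE_pos_half_if_members)
  fix A assume A: "A \<in> \<A>"
  have "(\<integral>\<^sup>+t. f t \<partial>lebesgue_on A) \<noteq> \<infinity>"
    using integral_le_rho[OF A, of f] assms(2) by (auto simp: top_unique)
  then show "AE t in lebesgue_on A. f t \<noteq> \<infinity>"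
    using assms A by (intro nn_integral_PInf_AE) (auto simp: nonneg_meas_def intro: measurable_member)
qed

lemma rho_suminf_le:
  assumes "\<And>k. g k \<in> nonneg_meas"
  shows "\<rho> (\<lambda>t. \<Sum>k. g k t) \<le> (\<Sum>k. \<rho> (g k))"
  unfolding rho_le_iff
proof
  fix A assume A: "A \<in> \<A>"
  have "(\<integral>\<^sup>+t. (\<Sum>k. g k t) \<partial>lebesgue_on A) = (\<Sum>k. \<integral>\<^sup>+t. g k t \<partial>lebesgue_on A)"
    using assms A by (intro nn_integral_suminf) (auto simp: nonneg_meas_def intro: measurable_member)
  also have "\<dots> \<le> (\<Sum>k. \<rho> (g k))"
    using A by (intro suminf_le summableI integral_le_rho)
  finally show "(\<integral>\<^sup>+t. (\<Sum>k. g k t) \<partial>lebesgue_on A) \<le> (\<Sum>k. \<rho> (g k))" .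
qed

lemma rho_liminf_le:
  assumes "\<And>k. g k \<in> nonneg_meas"
  shows "\<rho> (\<lambda>t. liminf (\<lambda>k. g k t)) \<le> liminf (\<lambda>k. \<rho> (g k))"
  unfolding rho_le_iff
proof
  fix A assume A: "A \<in> \<A>"
  have "(\<integral>\<^sup>+t. liminf (\<lambda>k. g k t) \<partial>lebesgue_on A) \<le> liminf (\<lambda>k. \<integral>\<^sup>+t. g k t \<partial>lebesgue_on A)"
    using assms A by (intro nn_integral_liminf) (auto simp: nonneg_meas_def intro: measurable_member)
  also have "\<dots> \<le> liminf (\<lambda>k. \<rho> (g k))"
    using A by (intro Liminf_mono always_eventually allI integral_le_rho)
  finally show "(\<integral>\<^sup>+t. liminf (\<lambda>k. g k t) \<partial>lebesgue_on A) \<le> liminf (\<lambda>k. \<rho> (g k))" .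
qed

lemma fnorm_add_le:
  "f \<in> borel_measurable (lebesgue_on pos_half) \<Longrightarrow> g \<in> borel_measurable (lebesgue_on pos_half)
    \<Longrightarrow> fnorm \<rho> (\<lambda>t. f t + g t) \<le> fnorm \<rho> f + fnorm \<rho> g"
  unfolding fnorm_def
  by (rule order.trans[OF rho_mono[OF e2ennreal_abs_add_le] rho_add_le[OF abs_measurable_nonneg_meas abs_measurable_nonneg_meas]])

lemma fnorm_cmult:
  "f \<in> borel_measurable (lebesgue_on pos_half) \<Longrightarrow> fnorm \<rho> (\<lambda>t. ereal c * f t) = ennreal \<bar>c\<bar> * fnorm \<rho> f"
  unfolding fnorm_def e2ennreal_abs_cmult by (rule rho_cmult[OF abs_measurable_nonneg_meas])

lemma AE_finite_if_fspace:
  assumes "f \<in> fspace \<rho>"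
  shows "AE t in lebesgue_on pos_half. \<bar>f t\<bar> \<noteq> \<infinity>"
proof -
  have "AE t in lebesgue_on pos_half. e2ennreal \<bar>f t\<bar> \<noteq> \<infinity>"
    using assms by (intro AE_finite_if_rho_finite abs_measurable_nonneg_meas) (auto simp: fspace_def fnorm_def)
  then show ?thesis
    by eventually_elim (auto simp: top_ennreal_def)
qed

lemma fnorm_le_liminf:
  assumes [measurable]: "\<And>k. v k \<in> borel_measurable (lebesgue_on pos_half)"
    and "AE t in lebesgue_on pos_half. (\<lambda>k. v k t) \<longlonglongrightarrow> w t"
  shows "fnorm \<rho> w \<le> liminf (\<lambda>k. fnorm \<rho> (v k))"
proof -
  have "fnorm \<rho> w \<le> \<rho> (\<lambda>t. liminf (\<lambda>k. e2ennreal \<bar>v k t\<bar>))"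
    unfolding fnorm_def using assms(2)
  proof (intro rho_mono_AE, eventually_elim)
    case (elim t)
    then have "(\<lambda>k. e2ennreal \<bar>v k t\<bar>) \<longlonglongrightarrow> e2ennreal \<bar>w t\<bar>"
      by (intro tendsto_e2ennrealI tendsto_abs_ereal)
    then show ?case
      by (simp add: lim_imp_Liminf)
  qed
  also have "\<dots> \<le> liminf (\<lambda>k. fnorm \<rho> (v k))"
    unfolding fnorm_def by (intro rho_liminf_le abs_measurable_nonneg_meas) measurable
  finally show ?thesis .
qed

lemma fnorm_diff_le_if_AE_tendsto:
  assumes [measurable]: "\<And>k. v k \<in> borel_measurable (lebesgue_on pos_half)"
      "g \<in> borel_measurable (lebesgue_on pos_half)"
    and "AE t in lebesgue_on pos_half. (\<lambda>k. v k t) \<longlonglongrightarrow> ereal (h t)"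
    and "\<forall>\<^sub>F k in sequentially. fnorm \<rho> (\<lambda>t. g t - v k t) \<le> c"
  shows "fnorm \<rho> (\<lambda>t. g t - ereal (h t)) \<le> c"
proof -
  have "fnorm \<rho> (\<lambda>t. g t - ereal (h t)) \<le> liminf (\<lambda>k. fnorm \<rho> (\<lambda>t. g t - v k t))"
    using assms(3) by (intro fnorm_le_liminf) (measurable, auto elim!: eventually_mono intro!: tendsto_intros)
  also have "\<dots> \<le> c"
    using assms(4) by (intro Liminf_le) auto
  finally show ?thesis .
qed

lemma fspace_if_fnorm_diff_finite:
  assumes "g \<in> fspace \<rho>" "(\<lambda>t. ereal (h t)) \<in> borel_measurable (lebesgue_on pos_half)"
    and "fnorm \<rho> (\<lambda>t. g t - ereal (h t)) < \<infinity>"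
  shows "(\<lambda>t. ereal (h t)) \<in> fspace \<rho>"
proof -
  have "fnorm \<rho> (\<lambda>t. ereal (h t)) \<le> \<rho> (\<lambda>t. e2ennreal \<bar>g t - ereal (h t)\<bar> + e2ennreal \<bar>g t\<bar>)"
    unfolding fnorm_def by (rule rho_mono, rule e2ennreal_abs_ereal_le)
  also have "\<dots> \<le> fnorm \<rho> (\<lambda>t. g t - ereal (h t)) + fnorm \<rho> g"
    unfolding fnorm_def using assms(1,2)
    by (intro rho_add_le abs_measurable_nonneg_meas) (auto dest: fspace_measurable)
  also have "\<dots> < \<infinity>"
    using assms by (simp add: fspace_def ennreal_add_less_top)
  finally show ?thesis
    using assms(2) by (simp add: fspace_def)
qed

lemma AE_tendsto_if_sum_fnorm_diff_finite:
  assumes v: "\<And>k. v k \<in> fspace \<rho>"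
    and "(\<Sum>k. fnorm \<rho> (\<lambda>t. v (Suc k) t - v k t)) < \<infinity>"
  shows "AE t in lebesgue_on pos_half. (\<lambda>k. v k t) \<longlonglongrightarrow> ereal (lim (\<lambda>k. real_of_ereal (v k t)))"
proof -
  have [measurable]: "\<And>k. v k \<in> borel_measurable (lebesgue_on pos_half)"
    using v by (rule fspace_measurable)
  define G where "G t = (\<Sum>k. e2ennreal \<bar>v (Suc k) t - v k t\<bar>)" for t
  have "\<rho> G \<le> (\<Sum>k. fnorm \<rho> (\<lambda>t. v (Suc k) t - v k t))"
    unfolding G_def fnorm_def by (intro rho_suminf_le abs_measurable_nonneg_meas) measurable
  then have "\<rho> G < \<infinity>"
    using assms(2) by (rule le_less_trans)
  moreover have "G \<in> nonneg_meas"
    unfolding G_def nonneg_meas_def by measurable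
  ultimately have "AE t in lebesgue_on pos_half. G t \<noteq> \<infinity>"
    by (intro AE_finite_if_rho_finite)
  moreover have "AE t in lebesgue_on pos_half. \<forall>k. \<bar>v k t\<bar> \<noteq> \<infinity>"
    unfolding AE_all_countable using v by (blast intro: AE_finite_if_fspace)
  ultimately show ?thesis
    unfolding G_def by eventually_elim (rule tendsto_ereal_if_sum_abs_diff_finite, auto)
qed

lemma fspace_complete:
  assumes u: "\<And>n. u n \<in> fspace \<rho>"
    and Cauchy: "\<forall>e>0. \<exists>N. \<forall>m\<ge>N. \<forall>n\<ge>N. fnorm \<rho> (\<lambda>t. u m t - u n t) < ennreal e"
  shows "\<exists>f\<in>fspace \<rho>. (\<lambda>n. fnorm \<rho> (\<lambda>t. u n t - f t)) \<longlonglongrightarrow> 0"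
proof -
  have [measurable]: "\<And>n. u n \<in> borel_measurable (lebesgue_on pos_half)"
    using u by (rule fspace_measurable)
  obtain r where "strict_mono r"
    and r: "\<And>k. fnorm \<rho> (\<lambda>t. u (r (Suc k)) t - u (r k) t) < ennreal ((1/2)^k)"
    using fast_Cauchy_subseq[OF Cauchy] by blast
  have "(\<Sum>k. fnorm \<rho> (\<lambda>t. u (r (Suc k)) t - u (r k) t)) \<le> (\<Sum>k. ennreal ((1/2)^k))"
    using r by (intro suminf_le summableI less_imp_le)
  then have "(\<Sum>k. fnorm \<rho> (\<lambda>t. u (r (Suc k)) t - u (r k) t)) < \<infinity>"
    unfolding suminf_ennreal_half_power by (simp add: le_less_trans)
  define h where "h t = lim (\<lambda>k. real_of_ereal (u (r k) t))" for t
  have lim: "AE t in lebesgue_on pos_half. (\<lambda>k. u (r k) t) \<longlonglongrightarrow> ereal (h t)"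
    unfolding h_def using u \<open>(\<Sum>k. _) < \<infinity>\<close> by (intro AE_tendsto_if_sum_fnorm_diff_finite)
  have [measurable]: "(\<lambda>t. ereal (h t)) \<in> borel_measurable (lebesgue_on pos_half)"
    unfolding h_def by measurable
  have tail: "fnorm \<rho> (\<lambda>t. u n t - ereal (h t)) \<le> ennreal e"
    if M: "\<forall>m\<ge>M. \<forall>n\<ge>M. fnorm \<rho> (\<lambda>t. u m t - u n t) < ennreal e" and "n \<ge> M" for e M n
  proof (rule fnorm_diff_le_if_AE_tendsto[OF _ _ lim])
    have "fnorm \<rho> (\<lambda>t. u n t - u (r k) t) \<le> ennreal e" if "k \<ge> M" for k
      using M \<open>n \<ge> M\<close> that seq_suble[OF \<open>strict_mono r\<close>, of k] by (auto intro: less_imp_le)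
    then show "\<forall>\<^sub>F k in sequentially. fnorm \<rho> (\<lambda>t. u n t - u (r k) t) \<le> ennreal e"
      by (auto simp: eventually_sequentially)
  qed measurable
  obtain M1 where "\<forall>m\<ge>M1. \<forall>n\<ge>M1. fnorm \<rho> (\<lambda>t. u m t - u n t) < ennreal 1"
    using Cauchy by (meson zero_less_one)
  then have "fnorm \<rho> (\<lambda>t. u M1 t - ereal (h t)) < \<infinity>"
    using tail[of M1 1 M1] by (simp add: le_less_trans)
  then have "(\<lambda>t. ereal (h t)) \<in> fspace \<rho>"
    by (intro fspace_if_fnorm_diff_finite[OF u]) measurable
  moreover have "(\<lambda>n. fnorm \<rho> (\<lambda>t. u n t - ereal (h t))) \<longlonglongrightarrow> 0"
  proof (rule tendsto_zero_ennreal)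
    fix e :: real assume "e > 0"
    then obtain M where "\<forall>m\<ge>M. \<forall>n\<ge>M. fnorm \<rho> (\<lambda>t. u m t - u n t) < ennreal (e/2)"
      using Cauchy half_gt_zero by blast
    then have "fnorm \<rho> (\<lambda>t. u n t - ereal (h t)) < ennreal e" if "n \<ge> M" for n
      using tail[OF _ that, of "e/2"] ennreal_lessI[of e "e/2"] \<open>e > 0\<close> by (auto intro: le_less_trans)
    then show "\<forall>\<^sub>F n in sequentially. fnorm \<rho> (\<lambda>t. u n t - ereal (h t)) < ennreal e"
      by (auto simp: eventually_sequentially)
  qed
  ultimately show ?thesis
    by (intro bexI[of _ "\<lambda>t. ereal (h t)"])
qed

lemma fnorm_cong_AE:
  "AE t in lebesgue_on pos_half. f t = g t \<Longrightarrow> fnorm \<rho> f = fnorm \<rho> g"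
  unfolding fnorm_def by (intro antisym rho_mono_AE) (auto elim!: eventually_mono)

lemma fnorm_eq_0_iff:
  "f \<in> borel_measurable (lebesgue_on pos_half) \<Longrightarrow> fnorm \<rho> f = 0 \<longleftrightarrow> (AE t in lebesgue_on pos_half. f t = 0)"
  unfolding fnorm_def by (simp add: rho_eq_0_iff abs_measurable_nonneg_meas e2ennreal_abs_eq_0_iff)

lemma banach_fspace_rho: "banach_fspace \<rho>"
  unfolding banach_fspace_def
proof (intro conjI ballI allI impI)
  fix f g assume "f \<in> fspace \<rho>" "g \<in> fspace \<rho>"
  then have [measurable]: "f \<in> borel_measurable (lebesgue_on pos_half)" "g \<in> borel_measurable (lebesgue_on pos_half)"
    and "fnorm \<rho> f + fnorm \<rho> g < \<infinity>"
    by (auto simp: fspace_def ennreal_add_less_top)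
  moreover show "fnorm \<rho> (\<lambda>t. f t + g t) \<le> fnorm \<rho> f + fnorm \<rho> g"
    by (rule fnorm_add_le) measurable
  ultimately show "(\<lambda>t. f t + g t) \<in> fspace \<rho>"
    by (auto simp: fspace_def intro: le_less_trans)
next
  fix f c assume "f \<in> fspace \<rho>"
  then have [measurable]: "f \<in> borel_measurable (lebesgue_on pos_half)" and "fnorm \<rho> f < \<infinity>"
    by (auto simp: fspace_def)
  moreover show "fnorm \<rho> (\<lambda>t. ereal c * f t) = ennreal \<bar>c\<bar> * fnorm \<rho> f"
    by (rule fnorm_cmult) measurable
  ultimately show "(\<lambda>t. ereal c * f t) \<in> fspace \<rho>"
    by (simp add: fspace_def ennreal_mult_less_top)
next
  fix u :: "nat \<Rightarrow> real \<Rightarrow> ereal"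
  assume "\<forall>n. u n \<in> fspace \<rho>" "\<forall>e>0. \<exists>N. \<forall>m\<ge>N. \<forall>n\<ge>N. fnorm \<rho> (\<lambda>t. u m t - u n t) < ennreal e"
  then show "\<exists>f\<in>fspace \<rho>. (\<lambda>n. fnorm \<rho> (\<lambda>t. u n t - f t)) \<longlonglongrightarrow> 0"
    by (intro fspace_complete) auto
qed (auto simp: fspace_def fnorm_eq_0_iff intro: fnorm_cong_AE)

end

lemma rational_interval_cover:
  assumes "t > 0"
  shows "\<exists>q\<in>\<rat>. q > 0 \<and> t \<in> {q..q + sqrt q}"
proof -
  obtain q where q: "q \<in> \<rat>" "max (t/2) (t - sqrt (t/2)) < q" "q < t"
    using Rats_dense_in_real[of "max (t/2) (t - sqrt (t/2))" t] assms by auto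
  moreover have "sqrt (t/2) \<le> sqrt q"
    using q by auto
  ultimately have "t \<le> q + sqrt q"
    by linarith
  with q assms show ?thesis by (intro bexI[of _ q]) auto
qed

interpretation calA: countable_cover_pos_half calA
proof
  let ?\<C> = "(\<lambda>q. {q..q + sqrt q}) ` (\<rat> \<inter> pos_half)"
  have "?\<C> \<subseteq> calA"
    by (auto simp: calA_def)
  moreover have "pos_half \<subseteq> \<Union>?\<C>"
    using rational_interval_cover by fastforce
  ultimately show "\<exists>\<C>\<subseteq>calA. countable \<C> \<and> pos_half \<subseteq> \<Union>\<C>"
    by (intro exI[of _ ?\<C>]) (auto intro: countable_rat)
qed (auto simp: calA_def)

lemma rhoY_eq_sup_set_nn_integral: "rhoY = sup_set_nn_integral calA"
  unfolding rhoY_def sup_set_nn_integral_def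
  by (intro ext SUP_cong refl, subst nn_integral_restrict_space) (auto simp: calA.sets_lebesgue)

lemma lebesgue_translation_vimage:
  fixes B :: "real set"
  assumes "B \<in> sets lebesgue"
  shows "(\<lambda>t. t + b) -` B \<in> sets lebesgue \<and> emeasure lebesgue ((\<lambda>t. t + b) -` B) = emeasure lebesgue B"
proof -
  have vimage_eq: "(\<lambda>t. t + b) -` B = (\<lambda>x. 1 *\<^sub>R x + -b) ` B"
    by (auto simp: image_iff intro!: bexI[where x = "_ + b"])
  show ?thesis
    using lebesgue_sets_translation[OF assms, of "-b"] emeasure_lebesgue_affine[of 1 "-b" B]
    unfolding vimage_eq by (simp add: add.commute)
qed

lemma measure_preserving_on_translation:
  assumes "\<And>t. t + b \<in> F \<Longrightarrow> t \<in> E"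
  shows "measure_preserving_on E F (\<lambda>t. t + b)"
  unfolding measure_preserving_on_def
proof (intro allI impI)
  fix B assume "B \<in> sets lebesgue" "B \<subseteq> F"
  moreover from this have "(\<lambda>t. t + b) -` B \<inter> E = (\<lambda>t. t + b) -` B"
    using assms by auto
  ultimately show "(\<lambda>t. t + b) -` B \<inter> E \<in> sets lebesgue \<and>
      emeasure lebesgue ((\<lambda>t. t + b) -` B \<inter> E) = emeasure lebesgue B"
    by (simp only: lebesgue_translation_vimage)
qed

lemma measure_preserving_on_cong:
  assumes "\<And>t. t \<in> E \<Longrightarrow> m t = m' t"
  shows "measure_preserving_on E F m \<longleftrightarrow> measure_preserving_on E F m'"
proof -
  have "m -` B \<inter> E = m' -` B \<inter> E" for B
    using assms by auto
  then show ?thesis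
    unfolding measure_preserving_on_def by simp
qed

lemma translation_in_MO:
  fixes b :: real
  assumes "b > 0"
  shows "(\<lambda>t. t + b) \<in> MO pos_half {b<..}"
proof -
  have "(\<lambda>t. t + b) ` pos_half = {b<..}"
    by (auto simp: image_iff intro!: bexI[where x = "_ - b"])
  then have bij: "bij_betw (\<lambda>t. t + b) pos_half {b<..}"
    by (auto simp: bij_betw_def inj_on_def)
  have "inv_into pos_half (\<lambda>t. t + b) t = t + -b" if "t \<in> {b<..}" for t
    using that by (intro inv_into_f_eq) (auto simp: inj_on_def)
  moreover have "measure_preserving_on {b<..} pos_half (\<lambda>t. t + -b)"
    by (rule measure_preserving_on_translation) auto
  ultimately have "measure_preserving_on {b<..} pos_half (inv_into pos_half (\<lambda>t. t + b))"
    by (subst measure_preserving_on_cong) auto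
  moreover have "measure_preserving_on pos_half {b<..} (\<lambda>t. t + b)"
    using assms by (intro measure_preserving_on_translation) auto
  ultimately show ?thesis
    using bij unfolding MO_def by (auto simp: strict_mono_on_def)
qed

lemma rhoY_indicator_le_sqrt:
  assumes "S \<in> sets lebesgue" "S \<subseteq> {..s}"
  shows "rhoY (indicator S) \<le> ennreal (sqrt s)"
  unfolding rhoY_def
proof (rule SUP_least)
  fix A assume A: "A \<in> calA"
  have "set_nn_integral lebesgue A (indicator S) = (\<integral>\<^sup>+t. indicator (S \<inter> A) t \<partial>lebesgue)"
    by (intro nn_integral_cong) (simp split: split_indicator)
  also have "\<dots> = emeasure lebesgue (S \<inter> A)"
    using assms(1) calA.sets_lebesgue[OF A] by (intro nn_integral_indicator sets.Int)
  also have "\<dots> \<le> ennreal (sqrt s)"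
  proof (cases "S \<inter> A = {}")
    case False
    then obtain y where y: "y \<in> S" "y \<in> A" by auto
    have "Inf A \<le> y"
      using y calA.subset_pos_half[OF A] by (intro cInf_lower) (auto intro!: bdd_belowI[of _ 0])
    also have "y \<le> s" using y assms(2) by auto
    finally have "ennreal (sqrt (Inf A)) \<le> ennreal (sqrt s)"
      by (intro ennreal_leI) simp
    moreover have "emeasure lebesgue A \<le> ennreal (sqrt (Inf A))"
      using A y by (auto simp: calA_def)
    ultimately have "emeasure lebesgue A \<le> ennreal (sqrt s)"
      by (rule order.trans[rotated])
    moreover have "emeasure lebesgue (S \<inter> A) \<le> emeasure lebesgue A"
      using A by (intro emeasure_mono calA.sets_lebesgue) auto
    ultimately show ?thesis by (rule order.trans[rotated])
  qed simp
  finally show "set_nn_integral lebesgue A (indicator S) \<le> ennreal (sqrt s)" .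
qed

lemma sqrt_le_rhoY_indicator:
  assumes "b > 0"
  shows "ennreal (sqrt b) \<le> rhoY (indicator {b<..b + sqrt b})"
proof -
  let ?A = "{b<..b + sqrt b}"
  have "?A \<in> calA"
    using assms by (auto simp: calA_def)
  then have "set_nn_integral lebesgue ?A (indicator ?A) \<le> rhoY (indicator ?A)"
    unfolding rhoY_def by (rule SUP_upper)
  moreover have "set_nn_integral lebesgue ?A (indicator ?A) = (\<integral>\<^sup>+t. indicator ?A t \<partial>lebesgue)"
    by (intro nn_integral_cong) (simp split: split_indicator)
  ultimately show ?thesis
    using assms by simp
qed

lemma indicator_in_fspace_rhoY:
  assumes "S \<in> sets lebesgue" "S \<subseteq> {..s}"
  shows "(\<lambda>t. ereal (indicator S t)) \<in> fspace rhoY"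
proof -
  have "fnorm rhoY (\<lambda>t. ereal (indicator S t)) < \<infinity>"
    unfolding fnorm_indicator using rhoY_indicator_le_sqrt[OF assms] by (simp add: le_less_trans)
  moreover have "(\<lambda>t. ereal (indicator S t)) \<in> borel_measurable (lebesgue_on pos_half)"
    using assms(1) by (intro measurable_restrict_space1 borel_measurable_ereal borel_measurable_indicator)
  ultimately show ?thesis by (simp add: fspace_def)
qed

lemma not_ess_subrearrangement_invariant_rhoY: "\<not> ess_subrearrangement_invariant rhoY"
proof
  assume "ess_subrearrangement_invariant rhoY"
  then obtain \<sigma> c where sri: "subrearrangement_invariant \<sigma>" and "fspace \<sigma> = fspace rhoY" and "c > 0"
    and equiv: "\<And>f. f \<in> fspace rhoY \<Longrightarrow>
      fnorm rhoY f \<le> ennreal c * fnorm \<sigma> f \<and> fnorm \<sigma> f \<le> ennreal c * fnorm rhoY f"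
    unfolding ess_subrearrangement_invariant_def by blast
  \<comment> \<open>\<open>s\<close> is chosen so that \<open>c\<^sup>2 \<surd>s < s\<close>, and \<open>b = s\<^sup>2\<close> makes \<open>(b, b + s]\<close> admissible\<close>
  define s where "s = (c * c + 1)^2"
  define b where "b = s^2"
  have "c * c + 1 > 0"
    by (simp add: add_nonneg_pos)
  then have "s > 0" "sqrt s = c * c + 1"
    by (simp_all add: s_def)
  then have "b > 0" "sqrt b = s"
    by (simp_all add: b_def)
  define f where "f t = ereal (indicator {b<..b + s} t)" for t
  have shifted: "f \<circ> (\<lambda>t. t + b) = (\<lambda>t. ereal (indicator {0<..s} t))"
    by (auto simp: f_def fun_eq_iff split: split_indicator)
  have f: "f \<in> fspace rhoY"
    unfolding f_def by (rule indicator_in_fspace_rhoY[of _ "b + s"]) auto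
  have f_shifted: "f \<circ> (\<lambda>t. t + b) \<in> fspace rhoY"
    unfolding shifted by (rule indicator_in_fspace_rhoY[of _ s]) auto
  have "fnorm \<sigma> (f \<circ> (\<lambda>t. t + b)) = fnorm \<sigma> (\<lambda>t. if t \<in> {b<..} then f t else 0)"
    using translation_in_MO[OF \<open>b > 0\<close>] f \<open>b > 0\<close> \<open>fspace \<sigma> = fspace rhoY\<close>
    by (intro sri[unfolded subrearrangement_invariant_def, rule_format]) auto
  also have "(\<lambda>t. if t \<in> {b<..} then f t else 0) = f"
    by (auto simp: f_def fun_eq_iff split: split_indicator)
  finally have \<sigma>_shift_invariant: "fnorm \<sigma> (f \<circ> (\<lambda>t. t + b)) = fnorm \<sigma> f" .
  have "ennreal s \<le> fnorm rhoY f"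
    unfolding f_def[abs_def] fnorm_indicator using sqrt_le_rhoY_indicator[OF \<open>b > 0\<close>] \<open>sqrt b = s\<close> by simp
  also have "\<dots> \<le> ennreal c * fnorm \<sigma> (f \<circ> (\<lambda>t. t + b))"
    using equiv[OF f] \<sigma>_shift_invariant by simp
  also have "\<dots> \<le> ennreal c * (ennreal c * fnorm rhoY (f \<circ> (\<lambda>t. t + b)))"
    using equiv[OF f_shifted] by (intro mult_left_mono) auto
  also have "\<dots> \<le> ennreal c * (ennreal c * ennreal (sqrt s))"
    unfolding shifted fnorm_indicator by (intro mult_left_mono rhoY_indicator_le_sqrt) auto
  also have "\<dots> = ennreal (c * c * (c * c + 1))"
    using \<open>c > 0\<close> \<open>sqrt s = c * c + 1\<close> by (simp add: ennreal_mult' mult.assoc)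
  finally have "s \<le> c * c * (c * c + 1)"
    using \<open>c > 0\<close> by (simp add: ennreal_le_iff add_pos_nonneg)
  moreover have "c * c * (c * c + 1) < s"
    unfolding s_def power2_eq_square using \<open>c * c + 1 > 0\<close> by (intro mult_strict_right_mono) auto
  ultimately show False by simp
qed

theorem mainTheorem4:
  shows "function_norm rhoY \<and> banach_fspace rhoY \<and> \<not> ess_subrearrangement_invariant rhoY"
  unfolding rhoY_eq_sup_set_nn_integral
  using calA.function_norm_rho calA.banach_fspace_rho
    not_ess_subrearrangement_invariant_rhoY[unfolded rhoY_eq_sup_set_nn_integral] by blast

end
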